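(* Let $f(x)=\sum_{n\ge 1} a_n \frac{x^n}{n!}$ be a formal power series with complex coefficients and $a_1\ne0$, and put $q:=a_1$. For all integers $s\ge 0$ and $n\ge k\ge 0$, \[ \begin{bmatrix} n\\ k\end{bmatrix}_{\phi^s}=\sum_{p=0}^{\min(s,n-k)}\ \sum_{k=j_0<j_1<\cdots<j_p=n} h_{s-p}\big(q^{j_0},\dots,q^{j_p}\big)\prod_{i=0}^{p-1}\begin{bmatrix} j_{i+1}\\ j_i\end{bmatrix}_{\phi}, \] where the inner sum is over strictly increasing integer tuples with $j_0=k$ and $j_p=n$, and \[ h_{s-p}(q^{j_0},\dots,q^{j_p})=\sum_{\substack{\lambda_0+\cdots+\lambda_p=s-p\\ \lambda_i\ge 0}} q^{j_0\lambda_0+\cdots+j_p\lambda_p}. \]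
   Context: For an integer $s\ge 0$, $f^s$ denotes the $s$-fold compositional iterate of $f$, with $f^0(x)=x$. For integers $n\ge k\ge 0$, $\begin{bmatrix} n\\ k\end{bmatrix}_{\phi^s}$ is defined by $\frac{f^s(x)^k}{k!}=\sum_{n\ge k}\begin{bmatrix} n\\ k\end{bmatrix}_{\phi^s}\frac{x^n}{n!}$, and $\begin{bmatrix} n\\ k\end{bmatrix}_{\phi}:=\begin{bmatrix} n\\ k\end{bmatrix}_{\phi^1}$ (the exponential partial Bell polynomial $B_{n,k}(a_1,\dots,a_{n-k+1})$). $h_m(x_0,\dots,x_p)$ denotes the complete homogeneous symmetric polynomial of degree $m$ in $x_0,\dots,x_p$. *)

theory Defs
  imports Complex_Main "HOL-Computational_Algebra.Formal_Power_Series"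
begin

definition fps_iter :: "complex fps \<Rightarrow> nat \<Rightarrow> complex fps" where
  "fps_iter f s = ((\<lambda>g. f oo g) ^^ s) fps_X"

text \<open>[n,k]_{phi^s}: f^s(x)^k / k! = sum_n [n,k] x^n/n!\<close>
definition bracket :: "complex fps \<Rightarrow> nat \<Rightarrow> nat \<Rightarrow> nat \<Rightarrow> complex" where
  "bracket f s n k = of_nat (fact n) / of_nat (fact k) * fps_nth (fps_iter f s ^ k) n"

definition comp_hom :: "nat \<Rightarrow> complex list \<Rightarrow> complex" where
  "comp_hom m xs = (\<Sum>ls\<in>{ls. length ls = length xs \<and> sum_list ls = m}.
       \<Prod>i<length xs. xs ! i ^ (ls ! i))"

end

theory Submission
  imports Defs
begin

text \<open>
  Composition of power series is multiplication of the lower triangular matrices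
  ([n,k]_{phi^s})_{n,k}: [n,k]_{phi^(s+1)} = sum_m [n,m]_{phi^s} [m,k]_phi, and the diagonal
  entries [k,k]_phi are q^k. The chain sum on the right satisfies the same recurrence in s:
  either the first index j_0 = k of a chain absorbs one more factor q^k, by
  h_(m+1)(x, xs) = x h_m(x, xs) + h_(m+1)(xs), or its first link k < j_1 is split off as the
  factor [j_1,k]_phi. Induction on s concludes.
\<close>

unbundle fps_syntax

lemma fps_iter_0: "fps_iter f 0 = fps_X"
  by (simp add: fps_iter_def)

lemma fps_iter_Suc: "fps_iter f (Suc s) = f oo fps_iter f s"
  by (simp add: fps_iter_def)

lemma fps_iter_1: "fps_iter f (Suc 0) = f"
  by (simp add: fps_iter_def)

lemma fps_iter_nth_0: "f $ 0 = 0 \<Longrightarrow> fps_iter f s $ 0 = 0"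
  by (induction s) (simp_all add: fps_iter_0 fps_iter_Suc)

lemma bracket_0: "bracket f 0 n k = (if n = k then 1 else 0)"
  by (simp add: bracket_def fps_iter_0)

lemma bracket_eq_0_if_less: "f $ 0 = 0 \<Longrightarrow> n < k \<Longrightarrow> bracket f s n k = 0"
  using startsby_zero_power_prefix[OF fps_iter_nth_0] by (simp add: bracket_def)

lemma bracket_1_diag: "f $ 0 = 0 \<Longrightarrow> bracket f 1 k k = (f $ 1) ^ k"
  by (simp add: bracket_def fps_iter_1 startsby_zero_power_nth_same)

lemma bracket_Suc:
  assumes "f $ 0 = 0"
  shows "bracket f (Suc s) n k = (\<Sum>m = k..n. bracket f s n m * bracket f 1 m k)"
proof -
  let ?g = "fps_iter f s"
  have "bracket f (Suc s) n k = of_nat (fact n) / of_nat (fact k) * ((f ^ k oo ?g) $ n)"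
    by (simp add: bracket_def fps_iter_Suc fps_compose_power[OF fps_iter_nth_0[OF assms]])
  also have "\<dots> = (\<Sum>m\<le>n. of_nat (fact n) / of_nat (fact k) * ((f ^ k) $ m * (?g ^ m $ n)))"
    by (simp add: fps_compose_nth atLeast0AtMost sum_distrib_left)
  also have "\<dots> = (\<Sum>m\<le>n. bracket f s n m * bracket f 1 m k)"
    by (intro sum.cong refl) (simp add: bracket_def fps_iter_1 field_simps)
  also have "\<dots> = (\<Sum>m = k..n. bracket f s n m * bracket f 1 m k)"
    by (rule sum.mono_neutral_right) (auto simp: bracket_eq_0_if_less[OF assms])
  finally show ?thesis .
qed

lemma finite_lists_sum_list_eq: "finite {ls :: nat list. length ls = n \<and> sum_list ls = m}"
proof (rule finite_subset)
  show "{ls :: nat list. length ls = n \<and> sum_list ls = m} \<subseteq>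
      {ls. set ls \<subseteq> {..m} \<and> length ls = n}"
    using member_le_sum_list by fastforce
qed (simp add: finite_lists_length_eq)

lemma comp_hom_Nil: "comp_hom m [] = (if m = 0 then 1 else 0)"
proof -
  have "{ls. length ls = length ([] :: complex list) \<and> sum_list ls = m} = (if m = 0 then {[]} else {})"
    by auto
  then show ?thesis
    by (simp add: comp_hom_def)
qed

lemma comp_hom_Cons: "comp_hom m (x # xs) = (\<Sum>l\<le>m. x ^ l * comp_hom (m - l) xs)"
proof -
  let ?A = "\<lambda>m. {ls :: nat list. length ls = length xs \<and> sum_list ls = m}"
  let ?S = "SIGMA l:{..m}. ?A (m - l)"
  have lists_Cons: "{ls. length ls = length (x # xs) \<and> sum_list ls = m} = (\<lambda>(l, ls). l # ls) ` ?S"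
  proof (intro set_eqI iffI)
    fix ls
    assume "ls \<in> {ls. length ls = length (x # xs) \<and> sum_list ls = m}"
    then obtain l ls' where "ls = l # ls'" "length ls' = length xs" "l + sum_list ls' = m"
      by (cases ls) auto
    then show "ls \<in> (\<lambda>(l, ls). l # ls) ` ?S"
      by (auto intro!: image_eqI[of _ _ "(l, ls')"])
  qed auto
  have inj: "inj_on (\<lambda>(l, ls). l # ls) ?S"
    by (auto simp: inj_on_def)
  have "comp_hom m (x # xs) = (\<Sum>(l, ls)\<in>?S. \<Prod>i<Suc (length xs). (x # xs) ! i ^ ((l # ls) ! i))"
    unfolding comp_hom_def lists_Cons by (subst sum.reindex[OF inj]) (simp add: case_prod_beta)
  also have "\<dots> = (\<Sum>(l, ls)\<in>?S. x ^ l * (\<Prod>i<length xs. xs ! i ^ (ls ! i)))"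
    by (intro sum.cong refl) (auto simp: prod.lessThan_Suc_shift simp del: prod.lessThan_Suc)
  also have "\<dots> = (\<Sum>l\<le>m. x ^ l * comp_hom (m - l) xs)"
    by (simp add: sum.Sigma[symmetric] finite_lists_sum_list_eq comp_hom_def sum_distrib_left)
  finally show ?thesis .
qed

lemma comp_hom_0: "comp_hom 0 xs = 1"
  by (induction xs) (simp_all add: comp_hom_Nil comp_hom_Cons)

lemma comp_hom_Suc_Cons: "comp_hom (Suc m) (x # xs) = x * comp_hom m (x # xs) + comp_hom (Suc m) xs"
  by (simp add: comp_hom_Cons sum.atMost_Suc_shift sum_distrib_left mult.assoc del: sum.atMost_Suc)

definition strict_chains :: "nat \<Rightarrow> nat \<Rightarrow> nat \<Rightarrow> nat list set" where
  "strict_chains p k n = {js. length js = p + 1 \<and> sorted_wrt (<) js \<and> js ! 0 = k \<and> js ! p = n}"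

lemma sorted_wrt_less_nth_ge:
  "sorted_wrt (<) (js :: nat list) \<Longrightarrow> i < length js \<Longrightarrow> js ! 0 + i \<le> js ! i"
proof (induction i)
  case (Suc i)
  then have "js ! i < js ! Suc i"
    by (simp add: sorted_wrt_nth_less)
  with Suc show ?case
    by simp
qed simp

lemma strict_chains_empty: "n < k + p \<Longrightarrow> strict_chains p k n = {}"
  using sorted_wrt_less_nth_ge[of _ p] by (fastforce simp: strict_chains_def)

lemma strict_chains_Cons: "js \<in> strict_chains p k n \<Longrightarrow> js = k # tl js"
  by (cases js) (auto simp: strict_chains_def)

lemma strict_chains_le: "js \<in> strict_chains p k n \<Longrightarrow> j \<in> set js \<Longrightarrow> j \<le> n"
  by (auto simp: strict_chains_def in_set_conv_nth
      intro: sorted_nth_mono[OF strict_sorted_imp_sorted, of js _ p, simplified])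

lemma finite_strict_chains: "finite (strict_chains p k n)"
proof (rule finite_subset)
  show "strict_chains p k n \<subseteq> {js. set js \<subseteq> {..n} \<and> length js = p + 1}"
    using strict_chains_le by (auto simp: strict_chains_def)
qed (simp add: finite_lists_length_eq)

lemma strict_chains_0: "strict_chains 0 k n = (if k = n then {[k]} else {})"
  by (auto simp: strict_chains_def length_Suc_conv)

lemma strict_chains_Suc:
  "strict_chains (Suc p) k n = (\<lambda>(j, js). k # js) ` (SIGMA j:{k<..n}. strict_chains p j n)"
proof (intro set_eqI iffI)
  fix js
  assume js: "js \<in> strict_chains (Suc p) k n"
  let ?js' = "tl js"
  have "?js' \<in> strict_chains p (?js' ! 0) n" "k < ?js' ! 0" "?js' ! 0 \<le> n"
    using js strict_chains_Cons[OF js] strict_chains_le[OF js]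
    by (cases ?js'; fastforce simp: strict_chains_def)+
  then show "js \<in> (\<lambda>(j, js). k # js) ` (SIGMA j:{k<..n}. strict_chains p j n)"
    using strict_chains_Cons[OF js] by (auto intro!: image_eqI[of _ _ "(?js' ! 0, ?js')"])
next
  fix js
  assume "js \<in> (\<lambda>(j, js). k # js) ` (SIGMA j:{k<..n}. strict_chains p j n)"
  then obtain j js' where js: "js = k # js'" "k < j" "js' \<in> strict_chains p j n"
    by auto
  have "sorted_wrt (<) js'"
    using js(3) by (simp add: strict_chains_def)
  then have "\<forall>x\<in>set js'. k < x"
    using js strict_chains_Cons[OF js(3)] by (metis order.strict_trans set_ConsD sorted_wrt.simps(2))
  then show "js \<in> strict_chains (Suc p) k n"
    using js by (auto simp: strict_chains_def)
qed

lemma sum_strict_chains_Suc: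
  "(\<Sum>js\<in>strict_chains (Suc p) k n. F js) = (\<Sum>j\<in>{k<..n}. \<Sum>js\<in>strict_chains p j n. F (k # js))"
proof -
  have "inj_on (\<lambda>(j, js). k # js) (SIGMA j:{k<..n}. strict_chains p j n)"
    by (auto simp: inj_on_def strict_chains_def)
  then show ?thesis
    unfolding strict_chains_Suc
    by (subst sum.reindex) (simp_all add: sum.Sigma finite_strict_chains case_prod_beta)
qed

definition chain_weight :: "complex fps \<Rightarrow> nat list \<Rightarrow> complex" where
  "chain_weight f js = (\<Prod>i < length js - 1. bracket f 1 (js ! (i + 1)) (js ! i))"

definition chain_level :: "complex fps \<Rightarrow> nat \<Rightarrow> nat \<Rightarrow> nat \<Rightarrow> nat \<Rightarrow> complex" where
  "chain_level f m p k n =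
     (\<Sum>js\<in>strict_chains p k n. comp_hom m (map (\<lambda>j. (f $ 1) ^ j) js) * chain_weight f js)"

definition chain_sum :: "complex fps \<Rightarrow> nat \<Rightarrow> nat \<Rightarrow> nat \<Rightarrow> complex" where
  "chain_sum f s n k = (\<Sum>p\<le>s. chain_level f (s - p) p k n)"

lemma chain_weight_Cons:
  "js \<noteq> [] \<Longrightarrow> chain_weight f (k # js) = bracket f 1 (hd js) k * chain_weight f js"
  by (cases js) (simp_all add: chain_weight_def prod.lessThan_Suc_shift del: prod.lessThan_Suc)

lemma chain_level_eq_head_tail:
  "chain_level f m p k n =
     (if m = 0 then 0 else (f $ 1) ^ k * chain_level f (m - 1) p k n) +
     (\<Sum>js\<in>strict_chains p k n. comp_hom m (map (\<lambda>j. (f $ 1) ^ j) (tl js)) * chain_weight f js)"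
proof (cases m)
  case 0
  then show ?thesis
    by (simp add: chain_level_def comp_hom_0)
next
  case (Suc m')
  let ?q = "\<lambda>j. (f $ 1) ^ j"
  have "comp_hom (Suc m') (map ?q js) =
      ?q k * comp_hom m' (map ?q js) + comp_hom (Suc m') (map ?q (tl js))"
    if "js \<in> strict_chains p k n" for js
  proof -
    have "map ?q js = ?q k # map ?q (tl js)"
      by (subst strict_chains_Cons[OF that]) simp
    then show ?thesis
      by (simp only: comp_hom_Suc_Cons)
  qed
  then show ?thesis
    unfolding chain_level_def Suc
    by (simp add: distrib_right sum.distrib sum_distrib_left mult.assoc cong: sum.cong)
qed

lemma sum_strict_chains_Suc_tl:
  "(\<Sum>js\<in>strict_chains (Suc p) k n. comp_hom m (map (\<lambda>j. (f $ 1) ^ j) (tl js)) * chain_weight f js) =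
     (\<Sum>j\<in>{k<..n}. bracket f 1 j k * chain_level f m p j n)"
proof -
  have "chain_weight f (k # js) = bracket f 1 j k * chain_weight f js"
    if "js \<in> strict_chains p j n" for j js
    using strict_chains_Cons[OF that] chain_weight_Cons[of js f k] by (metis list.distinct(1) list.sel(1))
  then show ?thesis
    by (simp add: sum_strict_chains_Suc chain_level_def sum_distrib_left mult_ac cong: sum.cong)
qed

lemma chain_sum_Suc:
  "chain_sum f (Suc s) n k =
     (f $ 1) ^ k * chain_sum f s n k + (\<Sum>j\<in>{k<..n}. bracket f 1 j k * chain_sum f s n j)"
proof -
  define tail where "tail m p =
    (\<Sum>js\<in>strict_chains p k n. comp_hom m (map (\<lambda>j. (f $ 1) ^ j) (tl js)) * chain_weight f js)"
    for m p
  have "chain_sum f (Suc s) n k =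
      (\<Sum>p\<le>Suc s. if p = Suc s then 0 else (f $ 1) ^ k * chain_level f (s - p) p k n) +
      (\<Sum>p\<le>Suc s. tail (Suc s - p) p)"
    unfolding chain_sum_def tail_def sum.distrib[symmetric]
    by (intro sum.cong refl) (subst chain_level_eq_head_tail, auto simp: Suc_diff_le)
  also have "(\<Sum>p\<le>Suc s. if p = Suc s then 0 else (f $ 1) ^ k * chain_level f (s - p) p k n) =
      (f $ 1) ^ k * chain_sum f s n k"
    by (simp add: chain_sum_def sum_distrib_left)
  also have "(\<Sum>p\<le>Suc s. tail (Suc s - p) p) = tail (Suc s) 0 + (\<Sum>p\<le>s. tail (s - p) (Suc p))"
    by (simp add: sum.atMost_Suc_shift del: sum.atMost_Suc)
  also have "tail (Suc s) 0 = 0"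
    by (simp add: tail_def strict_chains_0 comp_hom_Nil)
  also have "(\<Sum>p\<le>s. tail (s - p) (Suc p)) = (\<Sum>j\<in>{k<..n}. bracket f 1 j k * chain_sum f s n j)"
    unfolding tail_def sum_strict_chains_Suc_tl chain_sum_def sum_distrib_left by (rule sum.swap)
  finally show ?thesis
    by simp
qed

lemma bracket_eq_chain_sum:
  assumes "f $ 0 = 0"
  shows "k \<le> n \<Longrightarrow> bracket f s n k = chain_sum f s n k"
proof (induction s arbitrary: k)
  case 0
  then show ?case
    by (simp add: bracket_0 chain_sum_def chain_level_def strict_chains_0 comp_hom_0 chain_weight_def)
next
  case (Suc s)
  have "bracket f (Suc s) n k = (\<Sum>m = k..n. bracket f s n m * bracket f 1 m k)"
    using bracket_Suc[OF assms(1)] .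
  also have "\<dots> = bracket f s n k * (f $ 1) ^ k + (\<Sum>m\<in>{k<..n}. bracket f s n m * bracket f 1 m k)"
    using Suc.prems bracket_1_diag[OF assms(1), of k]
    by (simp add: sum.atLeast_Suc_atMost atLeastSucAtMost_greaterThanAtMost)
  also have "\<dots> = chain_sum f (Suc s) n k"
    using Suc by (simp add: chain_sum_Suc mult.commute)
  finally show ?case .
qed

lemma chain_sum_eq_sum_min:
  assumes "k \<le> n"
  shows "chain_sum f s n k = (\<Sum>p = 0..min s (n - k). chain_level f (s - p) p k n)"
  unfolding chain_sum_def atLeast0AtMost
proof (intro sum.mono_neutral_right ballI)
  fix p
  assume "p \<in> {..s} - {..min s (n - k)}"
  then have "n < k + p"
    using assms by auto
  then show "chain_level f (s - p) p k n = 0"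
    by (simp add: chain_level_def strict_chains_empty)
qed auto

theorem mainTheorem3:
  fixes f :: "complex fps" and s n k :: nat
  assumes "fps_nth f 0 = 0"
    and "fps_nth f 1 \<noteq> 0"
    and "k \<le> n"
  shows "bracket f s n k =
    (\<Sum>p = 0..min s (n - k).
       \<Sum>js\<in>{js. length js = p + 1 \<and> sorted_wrt (<) js \<and> js ! 0 = k \<and> js ! p = n}.
         comp_hom (s - p) (map (\<lambda>j. (fps_nth f 1) ^ j) js) *
         (\<Prod>i<p. bracket f 1 (js ! (i + 1)) (js ! i)))"
proof -
  have "bracket f s n k = chain_sum f s n k"
    using bracket_eq_chain_sum assms(1,3) by blast
  also have "\<dots> = (\<Sum>p = 0..min s (n - k). chain_level f (s - p) p k n)"
    using chain_sum_eq_sum_min assms(3) .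
  also have "\<dots> = (\<Sum>p = 0..min s (n - k).
       \<Sum>js\<in>{js. length js = p + 1 \<and> sorted_wrt (<) js \<and> js ! 0 = k \<and> js ! p = n}.
         comp_hom (s - p) (map (\<lambda>j. (fps_nth f 1) ^ j) js) *
         (\<Prod>i<p. bracket f 1 (js ! (i + 1)) (js ! i)))"
    unfolding chain_level_def strict_chains_def
    by (intro sum.cong refl) (simp add: chain_weight_def)
  finally show ?thesis .
qed

end
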